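(* If $K$ is a degenerate CMI, i.e. $K=(\cdot,\langle\ \rangle)$, then $(\cdot,\langle\ \rangle)$ is the only sub-CMI of $K$.
   Context: Setting: $X_1,\dots,X_n$ jointly distributed discrete random variables with $H(X_i)<\infty$; distribution unspecified. $X_\alpha=(X_i,i\in\alpha)$, $X_\emptyset$ constant. A CMI is $K=(C,\langle Q_1,\dots,Q_k\rangle)$, $k\ge0$, $C\subseteq\{1,\dots,n\}$, $\langle\cdot\rangle$ an unordered multiset of subsets; valid (for a given distribution) if $\sum_iH(X_{Q_i}|X_C)-H(X_{Q_1},\dots,X_{Q_k}|X_C)=0$. Empty members may be deleted. Degenerate = valid for every distribution; all degenerate CMIs are identified and written $(\cdot,\langle\ \rangle)$. $\mathrm{pur}(K)=(C,\langle Q_i\setminus C:Q_i\setminus C\ne\emptyset\rangle)$. For pure $K$: $\mathbb I_K$ = indices lying in at least two members of the collection if $k\ge2$, else $\emptyset$; $P_1,\dots,P_t$ the nonempty sets among $Q_i\setminus\mathbb I_K$; $\mathrm{can}(K)=(\cdot,\langle\ \rangle)$ if $k\le1$, $(C,\langle\mathbb I_K,\mathbb I_K\rangle)$ if $k\ge2,\mathbb I_K\ne\emptyset,t\le1$, $(C,\langle P_1..P_t\rangle)$ if $k\ge2,\mathbb I_K=\emptyset$, $(C,\langle\mathbb I_K,\mathbb I_K,P_1..P_t\rangle)$ if $k\ge2,\mathbb I_K\ne\emptyset,t\ge2$. For general $K$, $\mathbb I_K$ is the repeated-index set of $\mathrm{pur}(K)$ and $\mathrm{can}(\mathrm{pur}(K))$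 is written $(C,\langle\mathbb I_K,\mathbb I_K,P_i,1\le i\le t\rangle)$ (copies of $\mathbb I_K$ omitted if empty; for degenerate $K$ this means $\mathbb I_K=\emptyset$, $t\in\{0,1\}$, $C$ arbitrary). $P=\bigcup_iP_i$, $S=C\cup P$. $R_K^{K'}$: with $\mathrm{can}(\mathrm{pur}(K'))=(C',\langle\mathbb I_{K'},\mathbb I_{K'},P'_j,1\le j\le s\rangle)$, $D=\mathbb I_{K'}\setminus\mathbb I_K$ and $T_1,\dots,T_u$ the nonempty sets among $P'_j\setminus\mathbb I_K$: $R_K^{K'}=(\cdot,\langle\ \rangle)$ if $D=\emptyset,u\le1$; $(C'\setminus\mathbb I_K,\langle T_1..T_u\rangle)$ if $D=\emptyset,u\ge2$; $(C'\setminus\mathbb I_K,\langle D,D\rangle)$ if $D\ne\emptyset,u\le1$; $(C'\setminus\mathbb I_K,\langle D,D,T_1..T_u\rangle)$ if $D\ne\emptyset,u\ge2$. Sub-CMI: with $K''=R_K^{K'}$, $\mathrm{can}(\mathrm{pur}(K''))=(C'',\langle\mathbb I_{K''},\mathbb I_{K''},P''_j,1\le j\le r\rangle)$, $P''=\bigcup_jP''_j$, $K'$ is a sub-CMI of $K$ if: (i) $K'=(\cdot,\langle\ \rangle)$; or (ii) $\mathrm{can}(\mathrm{pur}(K''))=(\cdot,\langle\ \rangle)$ and $C\subseteq C'$; or (iii) $\mathrm{can}(\mathrm{pur}(K''))\ne(\cdot,\langle\ \rangle)$, $\mathbb I_{K''}=\emptyset$, $P''\subseteq P$, $C\subseteq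 C''\subseteq S\setminus P''$, and whenever $m_1\in P''_{j_1}$, $m_2\in P''_{j_2}$ with $j_1\ne j_2$, then $m_1\in P_{i_1}$, $m_2\in P_{i_2}$ with $i_1\ne i_2$. *)

theory Defs
  imports "HOL-Analysis.Analysis" "HOL-Library.Multiset"
          "HOL-Probability.Probability_Mass_Function"
begin

text \<open>A joint distribution of X_1,...,X_n is a pmf on outcomes nat => nat
  (omega i is the value of X_i; countable value sets are coded into nat).\<close>

type_synonym outcome = "nat \<Rightarrow> nat"

definition proj :: "nat set \<Rightarrow> outcome \<Rightarrow> outcome" where
  "proj A \<omega> = (\<lambda>i. if i \<in> A then \<omega> i else 0)"

definition ent_term :: "outcome pmf \<Rightarrow> nat set \<Rightarrow> outcome \<Rightarrow> real" where
  "ent_term p A x = - pmf (map_pmf (proj A) p) x * log 2 (pmf (map_pmf (proj A) p) x)"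

definition H :: "outcome pmf \<Rightarrow> nat set \<Rightarrow> real" where
  "H p A = infsum (ent_term p A) UNIV"

definition finite_entropy :: "outcome pmf \<Rightarrow> nat \<Rightarrow> bool" where
  "finite_entropy p i \<longleftrightarrow> ent_term p {i} summable_on UNIV"

definition Hc :: "outcome pmf \<Rightarrow> nat set \<Rightarrow> nat set \<Rightarrow> real" where
  "Hc p A C = H p (A \<union> C) - H p C"

text \<open>A CMI (C, <Q_1,...,Q_k>): conditioning set and a multiset of subsets.\<close>
type_synonym cmi = "nat set \<times> nat set multiset"

definition is_cmi :: "nat \<Rightarrow> cmi \<Rightarrow> bool" where
  "is_cmi n K \<longleftrightarrow> fst K \<subseteq> {1..n} \<and> (\<forall>Q\<in>#snd K. Q \<subseteq> {1..n})"

definition valid :: "outcome pmf \<Rightarrow> cmi \<Rightarrow> bool" where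
  "valid p K \<longleftrightarrow>
     sum_mset (image_mset (\<lambda>Q. Hc p Q (fst K)) (snd K))
       - Hc p (\<Union>(set_mset (snd K))) (fst K) = 0"

text \<open>Degenerate: valid for every distribution with finite H(X_i).
  All degenerate CMIs are identified with the symbol (.,< >).\<close>
definition degenerate :: "nat \<Rightarrow> cmi \<Rightarrow> bool" where
  "degenerate n K \<longleftrightarrow>
     (\<forall>p :: outcome pmf. (\<forall>i\<in>{1..n}. finite_entropy p i) \<longrightarrow> valid p K)"

definition pur :: "cmi \<Rightarrow> cmi" where
  "pur K = (fst K, filter_mset (\<lambda>Q. Q \<noteq> {}) (image_mset (\<lambda>Q. Q - fst K) (snd K)))"

definition rep :: "nat set multiset \<Rightarrow> nat set" where
  "rep Qs = (if size Qs \<ge> 2 then {m. 2 \<le> size (filter_mset (\<lambda>Q. m \<in> Q) Qs)} else {})"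

definition Psets_of :: "nat set \<Rightarrow> nat set multiset \<Rightarrow> nat set multiset" where
  "Psets_of I Qs = filter_mset (\<lambda>P. P \<noteq> {}) (image_mset (\<lambda>Q. Q - I) Qs)"

definition IK :: "cmi \<Rightarrow> nat set" where
  "IK K = rep (snd (pur K))"

definition Psets :: "cmi \<Rightarrow> nat set multiset" where
  "Psets K = Psets_of (IK K) (snd (pur K))"

definition Pun :: "cmi \<Rightarrow> nat set" where
  "Pun K = \<Union>(set_mset (Psets K))"

definition Sset :: "cmi \<Rightarrow> nat set" where
  "Sset K = fst K \<union> Pun K"

text \<open>Canonical form of a (pure) CMI; the symbol (.,< >) is represented by
  the CMI (C, {#}) with empty collection, which is degenerate.\<close>
definition can :: "cmi \<Rightarrow> cmi" where
  "can K = (let C = fst K; Qs = snd K; I = rep Qs; Ps = Psets_of I Qs in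
     if size Qs \<le> 1 then (C, {#})
     else if I = {} then (C, Ps)
     else if size Ps \<le> 1 then (C, {#I, I#})
     else (C, {#I, I#} + Ps))"

definition RK :: "cmi \<Rightarrow> cmi \<Rightarrow> cmi" where
  "RK K K' = (let I = IK K; C' = fst K'; D = IK K' - I;
       Ts = filter_mset (\<lambda>T. T \<noteq> {}) (image_mset (\<lambda>P. P - I) (Psets K')) in
     if D = {} \<and> size Ts \<le> 1 then (C' - I, {#})
     else if D = {} then (C' - I, Ts)
     else if size Ts \<le> 1 then (C' - I, {#D, D#})
     else (C' - I, {#D, D#} + Ts))"

definition sub_cmi :: "nat \<Rightarrow> cmi \<Rightarrow> cmi \<Rightarrow> bool" where
  "sub_cmi n K' K \<longleftrightarrow>
     degenerate n K' \<or>
     (let K'' = RK K K'; Kc = can (pur K''); P'' = Pun K'' in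
       (degenerate n Kc \<and> fst K \<subseteq> fst K') \<or>
       (\<not> degenerate n Kc \<and> IK K'' = {} \<and> P'' \<subseteq> Pun K \<and>
        fst K \<subseteq> fst Kc \<and> fst Kc \<subseteq> Sset K - P'' \<and>
        (\<forall>A\<in>#Psets K''. \<forall>B\<in>#(Psets K'' - {#A#}). \<forall>m1\<in>A. \<forall>m2\<in>B.
           (\<exists>X\<in>#Psets K. \<exists>Y\<in>#(Psets K - {#X#}). m1 \<in> X \<and> m2 \<in> Y))))"

end

theory Submission
  imports Defs
begin

text \<open>A CMI \<open>(C, \<langle>Q\<^sub>1, \<dots>, Q\<^sub>k\<rangle>)\<close> is degenerate iff at most one \<open>Q\<^sub>j\<close> is not contained
  in \<open>C\<close>. Indeed, copy one fair coin into every \<open>X\<^sub>i\<close> with \<open>i \<in> (\<Union>\<^sub>j Q\<^sub>j) - C\<close> and set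
  the other variables to 0: then each \<open>Q\<^sub>j \<not>\<subseteq> C\<close> has conditional entropy 1 given \<open>X\<^sub>C\<close>,
  and so has their union, so validity forces at most one such \<open>Q\<^sub>j\<close>.
  Hence a degenerate \<open>K\<close> has \<open>\<I>\<^sub>K = {}\<close> and at most one set \<open>P\<^sub>i\<close>. For nondegenerate \<open>K'\<close>
  the CMI \<open>R\<^sub>K\<^sup>K\<^sup>'\<close> is then pure with at least two members, so only clause (iii) of the
  sub-CMI definition could apply, and it requires two distinct sets \<open>P\<^sub>i\<close>.\<close>

lemma infsum_entropy_pmf_of_set:
  assumes "finite F" "F \<noteq> {}"
  shows "infsum (\<lambda>x. - pmf (pmf_of_set F) x * log 2 (pmf (pmf_of_set F) x)) UNIV
           = log 2 (card F)"
proof -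
  have "infsum (\<lambda>x. - pmf (pmf_of_set F) x * log 2 (pmf (pmf_of_set F) x)) UNIV
      = infsum (\<lambda>x. - pmf (pmf_of_set F) x * log 2 (pmf (pmf_of_set F) x)) F"
    by (rule infsum_cong_neutral) (use assms in auto)
  also have "\<dots> = (\<Sum>x\<in>F. log 2 (card F) / card F)"
    using assms by (simp add: log_divide)
  also have "\<dots> = log 2 (card F)"
    using assms by simp
  finally show ?thesis .
qed

lemma entropy_summable_finite_support:
  assumes "finite (set_pmf q)"
  shows "(\<lambda>x. - pmf q x * log 2 (pmf q x)) summable_on UNIV"
proof -
  have "(\<lambda>x. - pmf q x * log 2 (pmf q x)) summable_on set_pmf q"
    using assms by simp
  then show ?thesis
    by (rule summable_on_cong_neutral[THEN iffD1, rotated -1]) (auto simp: set_pmf_iff)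
qed

definition indicator_outcome :: "nat set \<Rightarrow> outcome" where
  "indicator_outcome T = (\<lambda>i. if i \<in> T then 1 else 0)"

definition coin_on :: "nat set \<Rightarrow> outcome pmf" where
  "coin_on T = pmf_of_set {(\<lambda>i. 0), indicator_outcome T}"

lemma H_coin_on:
  assumes "T \<noteq> {}"
  shows "H (coin_on T) A = (if A \<inter> T \<noteq> {} then 1 else 0)"
proof -
  have proj_zero: "proj A (\<lambda>i. 0) = (\<lambda>i. 0)"
    by (auto simp: proj_def)
  show ?thesis
  proof (cases "A \<inter> T = {}")
    case True
    have "proj A (indicator_outcome T) = (\<lambda>i. 0)"
      using True by (auto simp: proj_def indicator_outcome_def fun_eq_iff)
    then have "map_pmf (proj A) (coin_on T) = map_pmf (\<lambda>_. (\<lambda>i. 0)) (coin_on T)"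
      unfolding coin_on_def by (intro map_pmf_cong) (auto simp: proj_zero)
    then have "map_pmf (proj A) (coin_on T) = pmf_of_set {(\<lambda>i. 0)}"
      by (simp add: pmf_of_set_singleton)
    then show ?thesis
      using True infsum_entropy_pmf_of_set[of "{(\<lambda>i. 0::nat)}"]
      unfolding H_def ent_term_def by simp
  next
    case False
    have "proj A (indicator_outcome T) \<noteq> (\<lambda>i. 0)"
      using False by (auto simp: proj_def indicator_outcome_def fun_eq_iff)
    then have card_image: "card (proj A ` {(\<lambda>i. 0), indicator_outcome T}) = 2"
      and inj: "inj_on (proj A) {(\<lambda>i. 0), indicator_outcome T}"
      using proj_zero by (auto simp: inj_on_def)
    from inj have "map_pmf (proj A) (coin_on T)
                 = pmf_of_set (proj A ` {(\<lambda>i. 0), indicator_outcome T})"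
      unfolding coin_on_def by (rule map_pmf_of_set_inj) auto
    then show ?thesis
      using False card_image
        infsum_entropy_pmf_of_set[of "proj A ` {(\<lambda>i. 0), indicator_outcome T}"]
      unfolding H_def ent_term_def by simp
  qed
qed

lemma finite_entropy_coin_on: "finite_entropy (coin_on T) i"
  unfolding finite_entropy_def ent_term_def coin_on_def
  by (rule entropy_summable_finite_support) simp

lemma sum_mset_indicator:
  "sum_mset (image_mset (\<lambda>x. if P x then (1::real) else 0) M) = real (size (filter_mset P M))"
  by (induction M) auto

lemma size_pur: "size (snd (pur K)) = size (filter_mset (\<lambda>Q. \<not> Q \<subseteq> fst K) (snd K))"
  unfolding pur_def by (simp add: filter_mset_image_mset)

lemma valid_coin_on_imp_size_pur_le_1:
  assumes "valid (coin_on (\<Union>(set_mset (snd K)) - fst K)) K"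
  shows "size (snd (pur K)) \<le> 1"
proof (rule ccontr)
  assume two: "\<not> size (snd (pur K)) \<le> 1"
  define C where "C = fst K"
  define Qs where "Qs = snd K"
  define T where "T = \<Union>(set_mset Qs) - C"
  have "filter_mset (\<lambda>Q. \<not> Q \<subseteq> C) Qs \<noteq> {#}"
    using two unfolding size_pur C_def Qs_def by (metis size_empty zero_le)
  then have "T \<noteq> {}"
    unfolding T_def by auto
  then have Hc_eq: "Hc (coin_on T) Q C = (if \<not> Q \<subseteq> C then 1 else 0)"
    if "Q \<subseteq> \<Union>(set_mset Qs)" for Q
    using that by (auto simp: H_coin_on Hc_def T_def)
  have "sum_mset (image_mset (\<lambda>Q. Hc (coin_on T) Q C) Qs)
          = sum_mset (image_mset (\<lambda>Q. if \<not> Q \<subseteq> C then 1 else 0) Qs)"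
    by (intro arg_cong[where f = sum_mset] image_mset_cong Hc_eq) auto
  also have "\<dots> = real (size (snd (pur K)))"
    by (simp add: sum_mset_indicator size_pur C_def Qs_def)
  finally have "sum_mset (image_mset (\<lambda>Q. Hc (coin_on T) Q C) Qs) \<ge> 2"
    using two by simp
  moreover have "Hc (coin_on T) (\<Union>(set_mset Qs)) C \<le> 1"
    using Hc_eq[of "\<Union>(set_mset Qs)"] by simp
  ultimately show False
    using assms unfolding valid_def C_def Qs_def T_def by simp
qed

lemma valid_if_size_pur_le_1:
  assumes "size (snd (pur K)) \<le> 1"
  shows "valid p K"
proof -
  define C where "C = fst K"
  define Inside where "Inside = filter_mset (\<lambda>Q. Q \<subseteq> C) (snd K)"
  define Outside where "Outside = filter_mset (\<lambda>Q. \<not> Q \<subseteq> C) (snd K)"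
  have split: "snd K = Inside + Outside"
    unfolding Inside_def Outside_def by simp
  have "size Outside \<le> 1"
    using assms by (simp add: size_pur Outside_def C_def)
  then consider "Outside = {#}" | Q where "Outside = {#Q#}"
    by (metis One_nat_def le_SucE le_zero_eq size_1_singleton_mset size_eq_0_iff_empty)
  moreover have "sum_mset (image_mset (\<lambda>Q. Hc p Q C) Inside) = 0"
    by (auto simp: Inside_def Hc_def Un_absorb1 intro!: sum_mset.neutral)
  moreover have "\<Union>(set_mset Inside) \<subseteq> C"
    by (auto simp: Inside_def)
  ultimately show ?thesis
    unfolding valid_def C_def[symmetric] split
    by cases (auto simp: Hc_def sup_commute[of _ C] Un_assoc Un_absorb1 Un_absorb2
                   intro!: arg_cong[where f = "H p"])
qed

lemma degenerate_iff_size_pur_le_1: "degenerate n K \<longleftrightarrow> size (snd (pur K)) \<le> 1"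
  using valid_coin_on_imp_size_pur_le_1 valid_if_size_pur_le_1 finite_entropy_coin_on
  unfolding degenerate_def by blast

definition pure :: "nat set \<Rightarrow> nat set multiset \<Rightarrow> bool" where
  "pure C Ms \<longleftrightarrow> (\<forall>M\<in>#Ms. M \<noteq> {} \<and> M \<inter> C = {})"

lemma pure_pur: "pure (fst K) (snd (pur K))"
  by (auto simp: pure_def pur_def)

lemma pur_pure:
  assumes "pure C Ms"
  shows "pur (C, Ms) = (C, Ms)"
proof -
  have "image_mset (\<lambda>Q. Q - C) Ms = Ms"
    using assms by (auto simp: pure_def Diff_triv intro: image_mset_cong[where g = id, simplified])
  moreover have "filter_mset (\<lambda>Q. Q \<noteq> {}) Ms = Ms"
    using assms by (auto simp: pure_def filter_mset_eq_conv)
  ultimately show ?thesis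
    by (simp add: pur_def)
qed

lemma pure_Psets_of: "pure C Ms \<Longrightarrow> pure C (Psets_of I Ms)"
  by (auto simp: pure_def Psets_of_def)

lemma Psets_of_empty: "pure C Ms \<Longrightarrow> Psets_of {} Ms = Ms"
  by (auto simp: Psets_of_def pure_def filter_mset_eq_conv)

lemma rep_subset_Union: "rep Ms \<subseteq> \<Union>(set_mset Ms)"
proof
  fix m
  assume "m \<in> rep Ms"
  then have "2 \<le> size (filter_mset (\<lambda>Q. m \<in> Q) Ms)"
    by (simp add: rep_def split: if_splits)
  then obtain Q where "Q \<in># filter_mset (\<lambda>Q. m \<in> Q) Ms"
    by (metis multiset_nonemptyE not_numeral_le_zero size_empty)
  then show "m \<in> \<Union>(set_mset Ms)"
    by auto
qed

lemma rep_disjoint_pure: "pure C Ms \<Longrightarrow> rep Ms \<inter> C = {}"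
  using rep_subset_Union[of Ms] by (auto simp: pure_def)

lemma degenerate_pure_iff: "pure C Ms \<Longrightarrow> degenerate n (C, Ms) \<longleftrightarrow> size Ms \<le> 1"
  by (simp add: degenerate_iff_size_pur_le_1 pur_pure)

lemma two_le_size_mset_iff: "2 \<le> size M \<longleftrightarrow> (\<exists>A B. A \<in># M \<and> B \<in># M - {#A#})"
proof
  assume two: "2 \<le> size M"
  then obtain A where A: "A \<in># M"
    by (metis multiset_nonemptyE not_numeral_le_zero size_empty)
  with two have "size (M - {#A#}) \<noteq> 0"
    by (simp add: size_Diff_singleton)
  then obtain B where "B \<in># M - {#A#}"
    by (metis multiset_nonemptyE size_empty)
  with A show "\<exists>A B. A \<in># M \<and> B \<in># M - {#A#}"
    by blast
next
  assume "\<exists>A B. A \<in># M \<and> B \<in># M - {#A#}"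
  then obtain A B where "A \<in># M" "B \<in># M - {#A#}"
    by blast
  then have "A \<in># M" "size (M - {#A#}) \<noteq> 0"
    by auto
  then show "2 \<le> size M"
    by (simp add: size_Diff_singleton)
qed

lemma not_degenerate_can_pure:
  assumes "pure C Ms" "2 \<le> size Ms"
  shows "\<not> degenerate n (can (C, Ms))"
proof -
  have "pure C {#rep Ms, rep Ms#}" if "rep Ms \<noteq> {}"
    using that rep_disjoint_pure[OF assms(1)] by (auto simp: pure_def)
  then have "\<exists>Ms'. can (C, Ms) = (C, Ms') \<and> pure C Ms' \<and> 2 \<le> size Ms'"
    using assms pure_Psets_of[OF assms(1)] Psets_of_empty[OF assms(1)]
    by (auto simp: can_def Let_def pure_def)
  then show ?thesis
    using degenerate_pure_iff by fastforce
qed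

lemma RK_of_IK_empty:
  assumes "IK K = {}" "\<not> degenerate n K'"
  obtains Ms where "RK K K' = (fst K', Ms)" "pure (fst K') Ms" "2 \<le> size Ms"
proof -
  define Qs where "Qs = snd (pur K')"
  have pure_Qs: "pure (fst K') Qs"
    using pure_pur[of K'] by (simp add: Qs_def)
  have "2 \<le> size Qs"
    using assms(2) by (simp add: degenerate_iff_size_pur_le_1 Qs_def)
  moreover have "filter_mset (\<lambda>T. T \<noteq> {}) (Psets K') = Psets K'"
    by (auto simp: Psets_def Psets_of_def filter_mset_eq_conv)
  ultimately have "\<exists>Ms. RK K K' = (fst K', Ms) \<and> pure (fst K') Ms \<and> 2 \<le> size Ms"
    using pure_Qs pure_Psets_of[OF pure_Qs] Psets_of_empty[OF pure_Qs]
      rep_disjoint_pure[OF pure_Qs] assms(1)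
    by (auto simp: RK_def Let_def Psets_def IK_def Qs_def[symmetric] pure_def)
  then show ?thesis
    using that by blast
qed

lemma Psets_pure: "pure C Ms \<Longrightarrow> rep Ms = {} \<Longrightarrow> Psets (C, Ms) = Ms"
  by (simp add: Psets_def IK_def pur_pure Psets_of_empty)

lemma IK_pure: "pure C Ms \<Longrightarrow> IK (C, Ms) = rep Ms"
  by (simp add: IK_def pur_pure)

lemma nondegenerate_sub_cmi_needs_two_Psets:
  assumes sub: "sub_cmi n K' K" and "\<not> degenerate n K'" and "IK K = {}"
  shows "2 \<le> size (Psets K)"
proof -
  obtain Ms where RK_eq: "RK K K' = (fst K', Ms)" and pure_Ms: "pure (fst K') Ms"
    and two_Ms: "2 \<le> size Ms"
    using RK_of_IK_empty assms(2,3) by metis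
  have "\<not> degenerate n (can (pur (RK K K')))"
    unfolding RK_eq pur_pure[OF pure_Ms] using not_degenerate_can_pure[OF pure_Ms two_Ms] .
  then have "rep Ms = {}" and separated:
    "\<forall>A\<in>#Ms. \<forall>B\<in>#(Ms - {#A#}). \<forall>m1\<in>A. \<forall>m2\<in>B.
       (\<exists>X\<in>#Psets K. \<exists>Y\<in>#(Psets K - {#X#}). m1 \<in> X \<and> m2 \<in> Y)"
    using sub assms(2) Psets_pure[OF pure_Ms]
    by (auto simp: sub_cmi_def Let_def RK_eq IK_pure[OF pure_Ms])
  obtain A B where "A \<in># Ms" "B \<in># Ms - {#A#}"
    using two_Ms by (auto simp: two_le_size_mset_iff)
  moreover from this have "A \<noteq> {}" "B \<noteq> {}"
    using pure_Ms by (auto simp: pure_def dest: in_diffD)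
  then obtain m1 m2 where "m1 \<in> A" "m2 \<in> B"
    by blast
  ultimately obtain X Y where "X \<in># Psets K" "Y \<in># Psets K - {#X#}"
    using separated by blast
  then show ?thesis
    by (auto simp: two_le_size_mset_iff)
qed

theorem mainTheorem18:
  fixes n :: nat and K :: cmi
  assumes "is_cmi n K" and "degenerate n K"
  shows "\<forall>K'. is_cmi n K' \<longrightarrow> (sub_cmi n K' K \<longleftrightarrow> degenerate n K')"
proof (intro allI impI iffI)
  fix K'
  assume "degenerate n K'"
  then show "sub_cmi n K' K"
    by (simp add: sub_cmi_def)
next
  fix K'
  assume sub: "sub_cmi n K' K"
  have pur_K: "size (snd (pur K)) \<le> 1"
    using assms(2) by (simp add: degenerate_iff_size_pur_le_1)
  then have "IK K = {}"
    by (simp add: IK_def rep_def)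
  moreover have "size (Psets K) \<le> size (snd (pur K))"
    unfolding Psets_def Psets_of_def by (metis size_filter_mset_lesseq size_image_mset)
  ultimately show "degenerate n K'"
    using pur_K nondegenerate_sub_cmi_needs_two_Psets[OF sub] by fastforce
qed

end
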